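(* Let $K\ge 3$, $d\in\mathbb{N}$, $\eta>0$, and for each $k\in[K]=\{1,\dots,K\}$ let $n_k\in\mathbb{N}$ and points $x^k_1,\dots,x^k_{n_k}\in\mathbb{R}^d$ be given. Indices of marginals are taken cyclically: $K+1$ means $1$ and $0$ means $K$. For $\ell,t\in[K]$ define the matrix $\mathcal{K}^{(\ell,t)}\in\mathbb{R}^{n_\ell\times n_t}$ by $\mathcal{K}^{(\ell,t)}_{i,j}=\exp\!\big(-\tfrac1\eta\|x^\ell_i-x^t_j\|_2^2\big)$. Let $\mathcal{K}\in\mathbb{R}^{n_1\times\cdots\times n_K}$ be the kernel tensor of the circle-structured cost, $$\mathcal{K}_{i_1,\dots,i_K}=\exp\!\Big(-\tfrac1\eta\sum_{k=1}^{K}\|x^k_{i_k}-x^{k+1}_{i_{k+1}}\|_2^2\Big)=\prod_{k=1}^K\mathcal{K}^{(k,k+1)}_{i_k,i_{k+1}},$$ let $\phi^k\in\mathbb{R}^{n_k}$, $k\in[K]$, be arbitrary vectors and $\Phi=\bigotimes_{k=1}^K\phi^k$, i.e. $\Phi_{i_1,\dots,i_K}=\prod_{k=1}^K\phi^k_{i_k}$. For distinct $\ell,t\in[K]$ define $d(\ell,t)=t-\ell$ if $t\ge \ell$ and $d(\ell,t)=K-\ell+t$ otherwise, and define matrices $\alpha^{(\ell,t)}\in\mathbb{R}^{n_\ell\times n_t}$ recursively by $$\alpha^{(\ell,t)}=\begin{cases}\mathcal{K}^{(\ell,t)} & \text{if } d(\ell,t)=1,\\ \mathcal{K}^{(\ell,\ell+1)}\big(\phi^{\ell+1}\odot\alpha^{(\ell+1,t)}\big)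 & \text{otherwise.}\end{cases}$$ Then for every $k\in[K]$, $$P_k(\mathcal{K}\odot\Phi)=\Big(\big(\phi^k\odot\mathcal{K}^{(k,k+1)}\big)\odot\big(\phi^{k+1}\odot\alpha^{(k+1,k)}\big)^{\intercal}\Big)\mathbf{1}_{n_{k+1}},$$ i.e. $[P_k(\mathcal{K}\odot\Phi)]_{i}=\phi^k_{i}\sum_{j=1}^{n_{k+1}}\mathcal{K}^{(k,k+1)}_{i,j}\,\phi^{k+1}_j\,\alpha^{(k+1,k)}_{j,i}$ for $i\in[n_k]$.
   Context: $P_k$ denotes the $k$-th marginal projection of a tensor $T\in\mathbb{R}^{n_1\times\cdots\times n_K}$: $[P_k(T)]_{i}=\sum T_{i_1,\dots,i_K}$, the sum running over all indices $i_\ell\in[n_\ell]$, $\ell\ne k$, with $i_k=i$ fixed. For tensors of equal size, $\odot$ is the entrywise (Hadamard) product. For a vector $v\in\mathbb{R}^n$ and a matrix $A\in\mathbb{R}^{n\times m}$, $v\odot A$ denotes the matrix with entries $v_iA_{ij}$ (row scaling, $\mathrm{diag}(v)A$). $\mathbf{1}_{n}$ is the all-ones vector in $\mathbb{R}^{n}$. *)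

theory Defs
  imports "HOL-Analysis.Analysis"
begin

text \<open>Marginals are indexed by [K] = {1..K}; the points of marginal k are
  x k 1, ..., x k (n k).  Vectors in R^(n_k) are functions nat => real on {1..n k},
  matrices are functions nat => nat => real, tensors are functions on index tuples.\<close>

definition cyc_succ :: "nat \<Rightarrow> nat \<Rightarrow> nat" where
  "cyc_succ K k = (if k = K then 1 else k + 1)"

definition tuples :: "nat \<Rightarrow> (nat \<Rightarrow> nat) \<Rightarrow> (nat \<Rightarrow> nat) set" where
  "tuples K n = PiE {1..K} (\<lambda>k. {1..n k})"

definition marg :: "nat \<Rightarrow> (nat \<Rightarrow> nat) \<Rightarrow> nat \<Rightarrow> ((nat \<Rightarrow> nat) \<Rightarrow> real) \<Rightarrow> nat \<Rightarrow> real" where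
  "marg K n k T i = (\<Sum>\<iota>\<in>{\<iota>\<in>tuples K n. \<iota> k = i}. T \<iota>)"

definition kmat :: "real \<Rightarrow> (nat \<Rightarrow> nat \<Rightarrow> 'a::euclidean_space) \<Rightarrow> nat \<Rightarrow> nat \<Rightarrow> nat \<Rightarrow> nat \<Rightarrow> real" where
  "kmat \<eta> x l t i j = exp (- (1/\<eta>) * (norm (x l i - x t j))\<^sup>2)"

definition ktensor :: "nat \<Rightarrow> real \<Rightarrow> (nat \<Rightarrow> nat \<Rightarrow> 'a::euclidean_space) \<Rightarrow> (nat \<Rightarrow> nat) \<Rightarrow> real" where
  "ktensor K \<eta> x \<iota> =
     exp (- (1/\<eta>) * (\<Sum>k=1..K. (norm (x k (\<iota> k) - x (cyc_succ K k) (\<iota> (cyc_succ K k))))\<^sup>2))"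

definition phi_tensor :: "nat \<Rightarrow> (nat \<Rightarrow> nat \<Rightarrow> real) \<Rightarrow> (nat \<Rightarrow> nat) \<Rightarrow> real" where
  "phi_tensor K \<phi> \<iota> = (\<Prod>k=1..K. \<phi> k (\<iota> k))"

definition cdist :: "nat \<Rightarrow> nat \<Rightarrow> nat \<Rightarrow> nat" where
  "cdist K l t = (if t \<ge> l then t - l else K - l + t)"

text \<open>alpha_aux m l t is alpha^(l,t) for d(l,t) = m (recursion on the distance).\<close>
fun alpha_aux :: "nat \<Rightarrow> (nat \<Rightarrow> nat) \<Rightarrow> real \<Rightarrow> (nat \<Rightarrow> nat \<Rightarrow> 'a::euclidean_space) \<Rightarrow>
    (nat \<Rightarrow> nat \<Rightarrow> real) \<Rightarrow> nat \<Rightarrow> nat \<Rightarrow> nat \<Rightarrow> nat \<Rightarrow> nat \<Rightarrow> real" where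
  "alpha_aux K n \<eta> x \<phi> 0 l t = kmat \<eta> x l t"
| "alpha_aux K n \<eta> x \<phi> (Suc m) l t =
     (if m = 0 then kmat \<eta> x l t
      else (\<lambda>i j. \<Sum>r=1..n (cyc_succ K l).
              kmat \<eta> x l (cyc_succ K l) i r * (\<phi> (cyc_succ K l) r *
                alpha_aux K n \<eta> x \<phi> m (cyc_succ K l) t r j)))"

definition alpha :: "nat \<Rightarrow> (nat \<Rightarrow> nat) \<Rightarrow> real \<Rightarrow> (nat \<Rightarrow> nat \<Rightarrow> 'a::euclidean_space) \<Rightarrow>
    (nat \<Rightarrow> nat \<Rightarrow> real) \<Rightarrow> nat \<Rightarrow> nat \<Rightarrow> nat \<Rightarrow> nat \<Rightarrow> real" where
  "alpha K n \<eta> x \<phi> l t = alpha_aux K n \<eta> x \<phi> (cdist K l t) l t"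

end

theory Submission
  imports Defs
begin

text \<open>Unfolding its recursion, the entry \<open>(u, v)\<close> of \<open>\<alpha>\<close> for \<open>(l, t)\<close> is the sum over all walks
  \<open>l, l+1, \<dots>, t\<close> around the circle that take index \<open>u\<close> in marginal \<open>l\<close>, index \<open>v\<close> in
  marginal \<open>t\<close> and free indices in between, each walk weighted by the pairwise kernels of its
  steps and by \<open>\<phi>\<close> at its interior positions. The entries of the kernel tensor with
  \<open>i\<^sub>k = i\<close> are exactly the closed walks of length \<open>K\<close> from marginal \<open>k\<close> back to itself,
  so the marginal is \<open>\<phi>\<^sup>k\<^sub>i\<close> times the depth-\<open>K\<close> walk sum from \<open>k\<close> to \<open>k\<close> at \<open>(i, i)\<close>;
  splitting off the first step of that walk gives the formula.\<close>

lemma sum_PiE_insert: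
  assumes "x \<notin> S"
  shows "(\<Sum>f\<in>PiE (insert x S) T. F f) = (\<Sum>y\<in>T x. \<Sum>g\<in>PiE S T. F (g(x := y)))"
  by (simp add: PiE_insert_eq sum.reindex[OF inj_combinator[OF assms]] sum.cartesian_product prod.case_distrib)

lemma PiE_fix_coordinate:
  assumes "k \<in> J" and "i \<in> B k"
  shows "{\<iota> \<in> PiE J B. \<iota> k = i} = PiE J (B(k := {i}))"
  using assms by (auto simp: PiE_iff extensional_def split: if_split_asm)

lemma bij_betw_PiE_compose:
  assumes "bij_betw \<rho> I J"
  shows "bij_betw (\<lambda>\<iota>. restrict (\<iota> \<circ> \<rho>) I) (PiE J B) (PiE I (\<lambda>c. B (\<rho> c)))"
proof (rule bij_betw_byWitness[where f' = "\<lambda>g. restrict (g \<circ> the_inv_into I \<rho>) J"])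
  have inv: "the_inv_into I \<rho> ` J = I" "\<And>j. j \<in> J \<Longrightarrow> \<rho> (the_inv_into I \<rho> j) = j"
    "\<And>c. c \<in> I \<Longrightarrow> the_inv_into I \<rho> (\<rho> c) = c"
    using assms by (auto simp: bij_betw_def the_inv_into_f_f f_the_inv_into_f the_inv_into_onto)
  show "\<forall>\<iota>\<in>PiE J B. restrict (restrict (\<iota> \<circ> \<rho>) I \<circ> the_inv_into I \<rho>) J = \<iota>"
    using inv bij_betwE[OF assms] by (force simp: PiE_iff extensional_def)
  show "\<forall>g\<in>PiE I (\<lambda>c. B (\<rho> c)). restrict (restrict (g \<circ> the_inv_into I \<rho>) J \<circ> \<rho>) I = g"
    using inv bij_betwE[OF assms] by (force simp: PiE_iff extensional_def)
  show "(\<lambda>\<iota>. restrict (\<iota> \<circ> \<rho>) I) ` PiE J B \<subseteq> PiE I (\<lambda>c. B (\<rho> c))"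
    using bij_betwE[OF assms] by auto
  show "(\<lambda>g. restrict (g \<circ> the_inv_into I \<rho>) J) ` PiE I (\<lambda>c. B (\<rho> c)) \<subseteq> PiE J B"
    using inv by (force simp: PiE_iff)
qed

lemma mod_add_left_inj:
  fixes m c c' K :: nat
  assumes "(m + c) mod K = (m + c') mod K" and "c < K" and "c' < K"
  shows "c = c'"
proof -
  have "c' \<le> c" if "c \<le> c'" "(m + c) mod K = (m + c') mod K" "c' < K" for c c'
  proof -
    have "K dvd c' - c"
      using mod_eq_dvd_iff_nat[of "m + c" "m + c'" K] that by simp
    then show ?thesis
      using nat_dvd_not_less[of "c' - c" K] that by linarith
  qed
  then show ?thesis
    using assms by (metis le_cases le_antisym)
qed

lemma funpow_cyc_succ:
  assumes "k \<in> {1..K}"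
  shows "(cyc_succ K ^^ c) k = (k - 1 + c) mod K + 1"
proof (induction c)
  case 0
  then show ?case using assms by auto
next
  case (Suc c)
  then show ?case by (simp add: cyc_succ_def mod_Suc)
qed

lemma funpow_cyc_succ_period:
  assumes "k \<in> {1..K}"
  shows "(cyc_succ K ^^ K) k = k"
  using assms unfolding funpow_cyc_succ[OF assms] mod_add_self2 by auto

lemma bij_betw_funpow_cyc_succ:
  assumes "k \<in> {1..K}"
  shows "bij_betw (\<lambda>c. (cyc_succ K ^^ c) k) {..<K} {1..K}"
proof -
  let ?\<rho> = "\<lambda>c. (cyc_succ K ^^ c) k"
  have inj: "inj_on ?\<rho> {..<K}"
  proof (rule inj_onI)
    fix c c' assume "c \<in> {..<K}" "c' \<in> {..<K}" "?\<rho> c = ?\<rho> c'"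
    then show "c = c'" using mod_add_left_inj[of "k - 1" c K c'] by (simp add: funpow_cyc_succ[OF assms])
  qed
  have "?\<rho> ` {..<K} \<subseteq> {1..K}"
    using assms by (auto simp: funpow_cyc_succ Suc_leI)
  moreover have "card (?\<rho> ` {..<K}) = card {1..K}"
    using inj by (simp add: card_image)
  ultimately have "?\<rho> ` {..<K} = {1..K}"
    by (simp add: card_subset_eq)
  with inj show ?thesis
    by (simp add: bij_betw_def)
qed

text \<open>Walk positions are absolute: position \<open>c\<close> lies in marginal \<open>(cyc_succ K ^^ c) l\<close>,
  so peeling off the first step of a walk needs no shift of indices.\<close>
definition chain_weight ::
    "nat \<Rightarrow> real \<Rightarrow> (nat \<Rightarrow> nat \<Rightarrow> 'a::euclidean_space) \<Rightarrow> (nat \<Rightarrow> nat \<Rightarrow> real) \<Rightarrow>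
     nat \<Rightarrow> nat \<Rightarrow> nat \<Rightarrow> (nat \<Rightarrow> nat) \<Rightarrow> real" where
  "chain_weight K \<eta> x \<phi> l a b w =
     (\<Prod>c\<in>{a..<b}. kmat \<eta> x ((cyc_succ K ^^ c) l) ((cyc_succ K ^^ Suc c) l) (w c) (w (Suc c))) *
     (\<Prod>c\<in>{a<..<b}. \<phi> ((cyc_succ K ^^ c) l) (w c))"

lemma chain_weight_cong:
  assumes "\<And>c. c \<in> {a..b} \<Longrightarrow> w c = w' c"
  shows "chain_weight K \<eta> x \<phi> l a b w = chain_weight K \<eta> x \<phi> l a b w'"
  unfolding chain_weight_def using assms by (intro arg_cong2[where f = "(*)"] prod.cong) auto

lemma chain_weight_Suc_start:
  assumes "Suc a < b"
  shows "chain_weight K \<eta> x \<phi> l a b w =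
    kmat \<eta> x ((cyc_succ K ^^ a) l) ((cyc_succ K ^^ Suc a) l) (w a) (w (Suc a)) *
    \<phi> ((cyc_succ K ^^ Suc a) l) (w (Suc a)) * chain_weight K \<eta> x \<phi> l (Suc a) b w"
proof -
  have "{a..<b} = insert a {Suc a..<b}" "{a<..<b} = insert (Suc a) {Suc a<..<b}"
    using assms by auto
  then show ?thesis
    unfolding chain_weight_def by (simp add: mult_ac)
qed

lemma alpha_aux_chain_sum:
  assumes "a < b"
  shows "alpha_aux K n \<eta> x \<phi> (b - a) ((cyc_succ K ^^ a) l) ((cyc_succ K ^^ b) l) u v =
    (\<Sum>g\<in>PiE {a<..<b} (\<lambda>c. {1..n ((cyc_succ K ^^ c) l)}). chain_weight K \<eta> x \<phi> l a b (g(a := u, b := v)))"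
proof -
  let ?\<rho> = "\<lambda>c. (cyc_succ K ^^ c) l"
  let ?B = "\<lambda>c. {1..n (?\<rho> c)}"
  have "a \<le> b - 1"
    using assms by simp
  then show ?thesis
  proof (induction a arbitrary: u rule: inc_induct)
    case base
    obtain m where "b = Suc m"
      using assms by (metis less_imp_Suc_add)
    moreover have "{m<..<Suc m} = {}"
      by auto
    ultimately show ?case
      by (simp add: chain_weight_def)
  next
    case (step a)
    have b: "b - a = Suc (b - Suc a)" "Suc a < b"
      using step.hyps by auto
    have weight: "kmat \<eta> x (?\<rho> a) (?\<rho> (Suc a)) u r *
        (\<phi> (?\<rho> (Suc a)) r * chain_weight K \<eta> x \<phi> l (Suc a) b (g(Suc a := r, b := v))) =
      chain_weight K \<eta> x \<phi> l a b (g(Suc a := r, a := u, b := v))" for r g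
    proof -
      have "chain_weight K \<eta> x \<phi> l (Suc a) b (g(Suc a := r, a := u, b := v)) =
          chain_weight K \<eta> x \<phi> l (Suc a) b (g(Suc a := r, b := v))"
        by (rule chain_weight_cong) auto
      then show ?thesis
        using b(2) by (simp add: chain_weight_Suc_start[OF b(2)] mult.assoc)
    qed
    have "alpha_aux K n \<eta> x \<phi> (b - a) (?\<rho> a) (?\<rho> b) u v =
      (\<Sum>r\<in>?B (Suc a). kmat \<eta> x (?\<rho> a) (?\<rho> (Suc a)) u r *
         (\<phi> (?\<rho> (Suc a)) r * alpha_aux K n \<eta> x \<phi> (b - Suc a) (?\<rho> (Suc a)) (?\<rho> b) r v))"
      unfolding b(1) using b(2) by simp
    also have "\<dots> = (\<Sum>r\<in>?B (Suc a). \<Sum>g\<in>PiE {Suc a<..<b} ?B.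
        chain_weight K \<eta> x \<phi> l a b (g(Suc a := r, a := u, b := v)))"
      by (simp only: step.IH sum_distrib_left weight)
    also have "\<dots> = (\<Sum>g\<in>PiE {a<..<b} ?B. chain_weight K \<eta> x \<phi> l a b (g(a := u, b := v)))"
    proof -
      have "{a<..<b} = insert (Suc a) {Suc a<..<b}"
        using b(2) by auto
      then show ?thesis
        by (simp add: sum_PiE_insert)
    qed
    finally show ?case .
  qed
qed

lemma ktensor_prod:
  "ktensor K \<eta> x \<iota> = (\<Prod>k\<in>{1..K}. kmat \<eta> x k (cyc_succ K k) (\<iota> k) (\<iota> (cyc_succ K k)))"
  unfolding ktensor_def kmat_def by (simp add: sum_distrib_left exp_sum)

lemma ktensor_mult_phi_tensor:
  assumes "k \<in> {1..K}"
  shows "ktensor K \<eta> x \<iota> * phi_tensor K \<phi> \<iota> =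
    \<phi> k (\<iota> k) * chain_weight K \<eta> x \<phi> k 0 K (\<lambda>c. \<iota> ((cyc_succ K ^^ c) k))"
proof -
  let ?\<rho> = "\<lambda>c. (cyc_succ K ^^ c) k"
  have bij: "bij_betw ?\<rho> {..<K} {1..K}"
    using assms by (rule bij_betw_funpow_cyc_succ)
  have "ktensor K \<eta> x \<iota> = (\<Prod>c<K. kmat \<eta> x (?\<rho> c) (?\<rho> (Suc c)) (\<iota> (?\<rho> c)) (\<iota> (?\<rho> (Suc c))))"
    unfolding ktensor_prod prod.reindex_bij_betw[OF bij, symmetric] by simp
  moreover have "phi_tensor K \<phi> \<iota> = (\<Prod>c<K. \<phi> (?\<rho> c) (\<iota> (?\<rho> c)))"
    unfolding phi_tensor_def prod.reindex_bij_betw[OF bij, symmetric] ..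
  moreover have "{..<K} = insert 0 {0<..<K}"
    using assms by auto
  ultimately show ?thesis
    by (simp add: chain_weight_def atLeast0LessThan mult_ac)
qed

lemma marg_eq_closed_chain_sum:
  assumes k: "k \<in> {1..K}" and i: "i \<in> {1..n k}"
  shows "marg K n k (\<lambda>\<iota>. ktensor K \<eta> x \<iota> * phi_tensor K \<phi> \<iota>) i =
    \<phi> k i * (\<Sum>g\<in>PiE {0<..<K} (\<lambda>c. {1..n ((cyc_succ K ^^ c) k)}).
      chain_weight K \<eta> x \<phi> k 0 K (g(0 := i, K := i)))"
proof -
  let ?\<rho> = "\<lambda>c. (cyc_succ K ^^ c) k"
  let ?B = "(\<lambda>k'. {1..n k'})(k := {i})"
  let ?G = "\<lambda>w. \<phi> k i * chain_weight K \<eta> x \<phi> k 0 K (w(K := i))"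
  have bij: "bij_betw ?\<rho> {..<K} {1..K}"
    using k by (rule bij_betw_funpow_cyc_succ)
  have "marg K n k (\<lambda>\<iota>. ktensor K \<eta> x \<iota> * phi_tensor K \<phi> \<iota>) i =
      (\<Sum>\<iota>\<in>PiE {1..K} ?B. ?G (restrict (\<iota> \<circ> ?\<rho>) {..<K}))"
    unfolding marg_def tuples_def PiE_fix_coordinate[where B = "\<lambda>k'. {1..n k'}", OF k i]
  proof (rule sum.cong[OF refl])
    fix \<iota> assume "\<iota> \<in> PiE {1..K} ?B"
    then have "\<iota> k = i"
      using PiE_mem k by fastforce
    moreover have "chain_weight K \<eta> x \<phi> k 0 K (\<lambda>c. \<iota> (?\<rho> c)) =
        chain_weight K \<eta> x \<phi> k 0 K ((restrict (\<iota> \<circ> ?\<rho>) {..<K})(K := i))"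
      by (rule chain_weight_cong) (auto simp: funpow_cyc_succ_period[OF k] \<open>\<iota> k = i\<close>)
    ultimately show "ktensor K \<eta> x \<iota> * phi_tensor K \<phi> \<iota> = ?G (restrict (\<iota> \<circ> ?\<rho>) {..<K})"
      by (simp add: ktensor_mult_phi_tensor[OF k])
  qed
  also have "\<dots> = (\<Sum>w\<in>PiE {..<K} (\<lambda>c. ?B (?\<rho> c)). ?G w)"
    by (rule sum.reindex_bij_betw[OF bij_betw_PiE_compose[OF bij]])
  also have "PiE {..<K} (\<lambda>c. ?B (?\<rho> c)) =
      PiE (insert 0 {0<..<K}) ((\<lambda>c. {1..n (?\<rho> c)})(0 := {i}))"
  proof -
    have dom: "insert 0 {0<..<K} = {..<K}"
      using k by auto
    have "?B (?\<rho> c) = ((\<lambda>c. {1..n (?\<rho> c)})(0 := {i})) c" if "c \<in> {..<K}" for c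
    proof (cases "c = 0")
      case False
      then have "?\<rho> c \<noteq> k"
        using that inj_onD[OF bij_betw_imp_inj_on[OF bij], of c 0] by auto
      with False show ?thesis
        by simp
    qed simp
    then show ?thesis
      unfolding dom by (rule PiE_cong)
  qed
  also have "(\<Sum>w\<in>\<dots>. ?G w) = (\<Sum>g\<in>PiE {0<..<K} (\<lambda>c. {1..n (?\<rho> c)}). ?G (g(0 := i)))"
  proof -
    have "PiE {0<..<K} ((\<lambda>c. {1..n (?\<rho> c)})(0 := {i})) = PiE {0<..<K} (\<lambda>c. {1..n (?\<rho> c)})"
      by (rule PiE_cong) simp
    then show ?thesis
      by (simp add: sum_PiE_insert)
  qed
  finally show ?thesis
    by (simp add: sum_distrib_left)
qed

lemma marg_ktensor_phi_tensor:
  assumes "K \<ge> 2" and k: "k \<in> {1..K}" and i: "i \<in> {1..n k}"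
  shows "marg K n k (\<lambda>\<iota>. ktensor K \<eta> x \<iota> * phi_tensor K \<phi> \<iota>) i =
    \<phi> k i * (\<Sum>j=1..n (cyc_succ K k).
      kmat \<eta> x k (cyc_succ K k) i j * \<phi> (cyc_succ K k) j * alpha K n \<eta> x \<phi> (cyc_succ K k) k j i)"
proof -
  have K: "K = Suc (K - 1)" "K - 1 \<noteq> 0"
    using assms(1) by auto
  have alpha: "alpha K n \<eta> x \<phi> (cyc_succ K k) k = alpha_aux K n \<eta> x \<phi> (K - 1) (cyc_succ K k) k"
    using k by (auto simp: alpha_def cdist_def cyc_succ_def)
  have closed_walk: "alpha_aux K n \<eta> x \<phi> K k k i i =
      (\<Sum>j=1..n (cyc_succ K k). kmat \<eta> x k (cyc_succ K k) i j *
         (\<phi> (cyc_succ K k) j * alpha K n \<eta> x \<phi> (cyc_succ K k) k j i))"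
    by (simp only: alpha_aux.simps(2)[of K n \<eta> x \<phi> "K - 1", folded K(1)] alpha K(2) if_False)
  have "marg K n k (\<lambda>\<iota>. ktensor K \<eta> x \<iota> * phi_tensor K \<phi> \<iota>) i =
      \<phi> k i * alpha_aux K n \<eta> x \<phi> K k k i i"
    using marg_eq_closed_chain_sum[where n = n, OF k i] alpha_aux_chain_sum[of 0 K K n \<eta> x \<phi> k i i] K
    by (simp add: funpow_cyc_succ_period[OF k])
  then show ?thesis
    by (simp add: closed_walk mult.assoc)
qed

theorem theorem3:
  fixes K :: nat and n :: "nat \<Rightarrow> nat" and \<eta> :: real
    and x :: "nat \<Rightarrow> nat \<Rightarrow> 'a::euclidean_space"
    and \<phi> :: "nat \<Rightarrow> nat \<Rightarrow> real"
  assumes "K \<ge> 3" and "\<eta> > 0"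
  shows "\<forall>k\<in>{1..K}. \<forall>i\<in>{1..n k}.
           marg K n k (\<lambda>\<iota>. ktensor K \<eta> x \<iota> * phi_tensor K \<phi> \<iota>) i =
           \<phi> k i * (\<Sum>j=1..n (cyc_succ K k).
              kmat \<eta> x k (cyc_succ K k) i j * \<phi> (cyc_succ K k) j *
              alpha K n \<eta> x \<phi> (cyc_succ K k) k j i)"
  using assms(1) by (simp add: marg_ktensor_phi_tensor)

end
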